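(* Let $k\geq 0$ and $n\geq k$ be integers, and let $G$ be a $k$-degenerate graph of order $n$. Then $\mu(G)<\mu(S_{n,k})$, unless $G=S_{n,k}$.
   Context: All graphs are finite and simple. A graph $G$ is $k$-degenerate if every subgraph of $G$ contains a vertex of degree at most $k$. $S_{n,k}$ denotes the join of a complete graph of order $k$ and an independent set of order $n-k$ (every vertex of the $K_k$ is adjacent to every other vertex). For a graph $H$, $\mu(H)$ denotes the largest eigenvalue of the adjacency matrix of $H$. *)

theory Defs
  imports Complex_Main
begin

definition simple_graph :: "'a set \<Rightarrow> ('a \<Rightarrow> 'a \<Rightarrow> bool) \<Rightarrow> bool" where
  "simple_graph V E \<longleftrightarrow> finite V \<and> (\<forall>u\<in>V. \<forall>w\<in>V. E u w \<longrightarrow> E w u) \<and> (\<forall>u\<in>V. \<not> E u u)"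

definition degenerate :: "nat \<Rightarrow> 'a set \<Rightarrow> ('a \<Rightarrow> 'a \<Rightarrow> bool) \<Rightarrow> bool" where
  "degenerate k V E \<longleftrightarrow>
     (\<forall>U F. U \<subseteq> V \<longrightarrow> U \<noteq> {} \<longrightarrow> (\<forall>u w. F u w \<longrightarrow> E u w) \<longrightarrow>
        (\<exists>u\<in>U. card {w\<in>U. F u w} \<le> k))"

definition adj_eigenvalues :: "'a set \<Rightarrow> ('a \<Rightarrow> 'a \<Rightarrow> bool) \<Rightarrow> real set" where
  "adj_eigenvalues V E = {lam. \<exists>x :: 'a \<Rightarrow> real. (\<exists>v\<in>V. x v \<noteq> 0) \<and>
      (\<forall>u\<in>V. (\<Sum>w\<in>V. (if E u w then 1 else 0) * x w) = lam * x u)}"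

text \<open>Largest eigenvalue of the adjacency matrix (the adjacency matrix is real
  symmetric, so all its eigenvalues are real).\<close>
definition mu :: "'a set \<Rightarrow> ('a \<Rightarrow> 'a \<Rightarrow> bool) \<Rightarrow> real" where
  "mu V E = Max (adj_eigenvalues V E)"

text \<open>S_{n,k}: vertices 0..n-1; vertices 0..k-1 form a clique, the rest an independent
  set, and every clique vertex is adjacent to every other vertex.\<close>
definition S_verts :: "nat \<Rightarrow> nat set" where
  "S_verts n = {0..<n}"

definition S_edge :: "nat \<Rightarrow> nat \<Rightarrow> nat \<Rightarrow> bool" where
  "S_edge k i j \<longleftrightarrow> i \<noteq> j \<and> (i < k \<or> j < k)"

definition graph_iso :: "'a set \<Rightarrow> ('a \<Rightarrow> 'a \<Rightarrow> bool) \<Rightarrow> 'b set \<Rightarrow> ('b \<Rightarrow> 'b \<Rightarrow> bool) \<Rightarrow> bool" where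
  "graph_iso V E W F \<longleftrightarrow> (\<exists>f. bij_betw f V W \<and> (\<forall>u\<in>V. \<forall>w\<in>V. E u w \<longleftrightarrow> F (f u) (f w)))"

end

theory Submission
  imports Defs "Jordan_Normal_Form.Spectral_Radius" "HOL-Analysis.Convex"
begin

text \<open>For a nonnegative vector \<open>x\<close>, removing a vertex of degree at most \<open>k\<close> and inducting shows
  that the quadratic form of a \<open>k\<close>-degenerate graph is dominated by that of a complete split
  graph whose clique \<open>D\<close> consists of \<open>k\<close> largest entries of \<open>x\<close>. By Cauchy-Schwarz and AM-GM
  the latter form is at most \<open>r |x|\<^sup>2\<close>, where \<open>r = \<mu>(S_{n,k})\<close> is the positive root of
  \<open>r\<^sup>2 = (k - 1) r + k (n - k)\<close>. Hence \<open>\<mu>(G) \<le> r\<close>. In case of equality \<open>|z|\<close>, for an eigenvector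
  \<open>z\<close> of \<open>\<mu>(G)\<close>, is an eigenvector of the split graph, hence constant on \<open>D\<close> and on its
  complement; since \<open>G\<close> has no more edges than \<open>S_{n,k}\<close>, a weighted edge count then forces \<open>G\<close>
  to be that split graph.\<close>

section \<open>Real eigenvalues of symmetric matrices\<close>

definition eigenvalue_on :: "'a set \<Rightarrow> ('a \<Rightarrow> 'a \<Rightarrow> 'b::field) \<Rightarrow> 'b \<Rightarrow> bool" where
  "eigenvalue_on V a c \<longleftrightarrow>
     (\<exists>x. (\<exists>v\<in>V. x v \<noteq> 0) \<and> (\<forall>u\<in>V. (\<Sum>w\<in>V. a u w * x w) = c * x u))"

lemma eigenvalue_on_iff_spectrum:
  fixes a :: "'a \<Rightarrow> 'a \<Rightarrow> 'b::field"
  assumes f: "bij_betw f {0..<n} V"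
  shows "eigenvalue_on V a c \<longleftrightarrow> c \<in> spectrum (mat n n (\<lambda>(i, j). a (f i) (f j)))"
    (is "_ \<longleftrightarrow> c \<in> spectrum ?A")
proof -
  have fV: "f ` {0..<n} = V" using f by (simp add: bij_betw_def)
  have ball_V: "(\<forall>u\<in>V. P u) \<longleftrightarrow> (\<forall>i<n. P (f i))"
    and bex_V: "(\<exists>u\<in>V. P u) \<longleftrightarrow> (\<exists>i<n. P (f i))" for P
    unfolding fV[symmetric] by auto
  have eigenvector_iff: "eigenvector ?A (vec n (\<lambda>j. x (f j))) c \<longleftrightarrow>
      (\<exists>v\<in>V. x v \<noteq> 0) \<and> (\<forall>u\<in>V. (\<Sum>w\<in>V. a u w * x w) = c * x u)" for x
  proof -
    have row: "(\<Sum>j<n. a (f i) (f j) * x (f j)) = (\<Sum>w\<in>V. a (f i) w * x w)" for i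
      using sum.reindex_bij_betw[OF f, of "\<lambda>w. a (f i) w * x w"] by (simp add: atLeast0LessThan)
    show ?thesis
      unfolding eigenvector_def ball_V bex_V
      by (auto simp: vec_eq_iff scalar_prod_def atLeast0LessThan row)
  qed
  have vec_of_fun: "v = vec n (\<lambda>j. v $ inv_into {0..<n} f (f j))" if "v \<in> carrier_vec n" for v
    using that bij_betw_imp_inj_on[OF f] by (auto simp: vec_eq_iff inv_into_f_f)
  show ?thesis
  proof
    assume "eigenvalue_on V a c"
    then obtain x where "(\<exists>v\<in>V. x v \<noteq> 0) \<and> (\<forall>u\<in>V. (\<Sum>w\<in>V. a u w * x w) = c * x u)"
      unfolding eigenvalue_on_def by blast
    then have "eigenvector ?A (vec n (\<lambda>j. x (f j))) c" using eigenvector_iff by blast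
    then show "c \<in> spectrum ?A" unfolding spectrum_def eigenvalue_def by blast
  next
    assume "c \<in> spectrum ?A"
    then obtain v where v: "eigenvector ?A v c" unfolding spectrum_def eigenvalue_def by blast
    define x where "x w = v $ inv_into {0..<n} f w" for w
    have "v = vec n (\<lambda>j. x (f j))"
      unfolding x_def by (rule vec_of_fun) (use v in \<open>simp add: eigenvector_def\<close>)
    then have "(\<exists>v\<in>V. x v \<noteq> 0) \<and> (\<forall>u\<in>V. (\<Sum>w\<in>V. a u w * x w) = c * x u)"
      using v eigenvector_iff[of x] by simp
    then show "eigenvalue_on V a c" unfolding eigenvalue_on_def by blast
  qed
qed

lemma finite_eigenvalue_on:
  fixes a :: "'a \<Rightarrow> 'a \<Rightarrow> 'b::field"
  assumes "finite V"
  shows "finite (Collect (eigenvalue_on V a))"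
proof -
  obtain f where f: "bij_betw f {0..<card V} V"
    using ex_bij_betw_nat_finite[OF assms] by blast
  have "Collect (eigenvalue_on V a) = spectrum (mat (card V) (card V) (\<lambda>(i, j). a (f i) (f j)))"
    using eigenvalue_on_iff_spectrum[OF f] by blast
  then show ?thesis using card_finite_spectrum(1)[OF mat_carrier] by simp
qed

lemma ex_complex_eigenvalue_on:
  fixes a :: "'a \<Rightarrow> 'a \<Rightarrow> complex"
  assumes "finite V" and "V \<noteq> {}"
  shows "\<exists>c. eigenvalue_on V a c"
proof -
  obtain f where f: "bij_betw f {0..<card V} V"
    using ex_bij_betw_nat_finite[OF assms(1)] by blast
  have "card V > 0" using assms by (simp add: card_gt_0_iff)
  then obtain c where "c \<in> spectrum (mat (card V) (card V) (\<lambda>(i, j). a (f i) (f j)))"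
    using spectrum_non_empty[OF mat_carrier] by blast
  then show ?thesis using eigenvalue_on_iff_spectrum[OF f] by blast
qed

text \<open>\<open>y\<^sup>* A y = c |y|\<^sup>2\<close> is self-conjugate when \<open>A\<close> is real symmetric.\<close>
lemma eigenvalue_on_symmetric_real:
  fixes a :: "'a \<Rightarrow> 'a \<Rightarrow> real"
  assumes fin: "finite V" and sym: "\<And>u w. u \<in> V \<Longrightarrow> w \<in> V \<Longrightarrow> a u w = a w u"
    and c: "eigenvalue_on V (\<lambda>u w. complex_of_real (a u w)) c"
  shows "Im c = 0"
proof -
  obtain y v where v: "v \<in> V" "y v \<noteq> 0"
    and ev: "\<And>u. u \<in> V \<Longrightarrow> (\<Sum>w\<in>V. complex_of_real (a u w) * y w) = c * y u"
    using c unfolding eigenvalue_on_def by blast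
  define s where "s = (\<Sum>u\<in>V. \<Sum>w\<in>V. complex_of_real (a u w) * cnj (y u) * y w)"
  define N where "N = (\<Sum>u\<in>V. (Re (y u))\<^sup>2 + (Im (y u))\<^sup>2)"
  have "s = (\<Sum>u\<in>V. cnj (y u) * (\<Sum>w\<in>V. complex_of_real (a u w) * y w))"
    unfolding s_def by (simp add: sum_distrib_left mult_ac)
  also have "\<dots> = (\<Sum>u\<in>V. cnj (y u) * (c * y u))"
    using ev by simp
  also have "\<dots> = c * complex_of_real N"
    unfolding N_def of_real_sum sum_distrib_left
    by (intro sum.cong) (simp_all add: complex_mult_cnj mult_ac)
  finally have s: "s = c * complex_of_real N" .
  have "cnj s = (\<Sum>u\<in>V. \<Sum>w\<in>V. complex_of_real (a u w) * y u * cnj (y w))"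
    unfolding s_def by (simp add: mult_ac)
  also have "\<dots> = (\<Sum>w\<in>V. \<Sum>u\<in>V. complex_of_real (a u w) * y u * cnj (y w))"
    by (rule sum.swap)
  also have "\<dots> = s"
    unfolding s_def using sym by (intro sum.cong refl) (simp add: mult_ac)
  finally have "Im s = 0" by (metis cnj.sel(2) neg_equal_zero)
  moreover have "N > 0"
    unfolding N_def using fin v
    by (intro sum_pos2[OF fin v(1)]) (auto simp: sum_power2_gt_zero_iff complex_eq_iff)
  ultimately show "Im c = 0" using s by simp
qed

lemma eigenvalue_on_Re_of_symmetric:
  fixes a :: "'a \<Rightarrow> 'a \<Rightarrow> real"
  assumes fin: "finite V" and sym: "\<And>u w. u \<in> V \<Longrightarrow> w \<in> V \<Longrightarrow> a u w = a w u"
    and c: "eigenvalue_on V (\<lambda>u w. complex_of_real (a u w)) c"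
  shows "eigenvalue_on V a (Re c)"
proof -
  obtain y v where v: "v \<in> V" "y v \<noteq> 0"
    and ev: "\<And>u. u \<in> V \<Longrightarrow> (\<Sum>w\<in>V. complex_of_real (a u w) * y w) = c * y u"
    using c unfolding eigenvalue_on_def by blast
  have Re_Im_eigen: "(\<Sum>w\<in>V. a u w * Re (y w)) = Re c * Re (y u) \<and>
      (\<Sum>w\<in>V. a u w * Im (y w)) = Re c * Im (y u)" if "u \<in> V" for u
    using arg_cong[OF ev[OF that], of Re] arg_cong[OF ev[OF that], of Im]
      eigenvalue_on_symmetric_real[OF fin sym c]
    by simp
  have "Re (y v) \<noteq> 0 \<or> Im (y v) \<noteq> 0" using v(2) by (simp add: complex_eq_iff)
  then show ?thesis
  proof
    assume "Re (y v) \<noteq> 0"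
    then show ?thesis
      unfolding eigenvalue_on_def using Re_Im_eigen v(1) by (intro exI[of _ "\<lambda>w. Re (y w)"]) auto
  next
    assume "Im (y v) \<noteq> 0"
    then show ?thesis
      unfolding eigenvalue_on_def using Re_Im_eigen v(1) by (intro exI[of _ "\<lambda>w. Im (y w)"]) auto
  qed
qed

section \<open>Quadratic forms of graphs\<close>

definition adj :: "('a \<Rightarrow> 'a \<Rightarrow> bool) \<Rightarrow> 'a \<Rightarrow> 'a \<Rightarrow> real" where
  "adj E u w = (if E u w then 1 else 0)"

definition quad_form :: "'a set \<Rightarrow> ('a \<Rightarrow> 'a \<Rightarrow> bool) \<Rightarrow> ('a \<Rightarrow> real) \<Rightarrow> real" where
  "quad_form V E x = (\<Sum>u\<in>V. \<Sum>w\<in>V. adj E u w * x u * x w)"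

definition sq_norm :: "'a set \<Rightarrow> ('a \<Rightarrow> real) \<Rightarrow> real" where
  "sq_norm V x = (\<Sum>u\<in>V. (x u)\<^sup>2)"

text \<open>Complete split graph with clique \<open>D\<close>; \<open>S_edge k\<close> is \<open>split_edge {0..<k}\<close> on \<open>{0..<n}\<close>.\<close>
definition split_edge :: "'a set \<Rightarrow> 'a \<Rightarrow> 'a \<Rightarrow> bool" where
  "split_edge D u w \<longleftrightarrow> u \<noteq> w \<and> (u \<in> D \<or> w \<in> D)"

definition top_set :: "'a set \<Rightarrow> ('a \<Rightarrow> real) \<Rightarrow> 'a set \<Rightarrow> bool" where
  "top_set U x D \<longleftrightarrow> (\<forall>d\<in>D. \<forall>v\<in>U - D. x v \<le> x d)"

lemma adj_eigenvalues_eq: "adj_eigenvalues V E = Collect (eigenvalue_on V (adj E))"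
  unfolding adj_eigenvalues_def eigenvalue_on_def adj_def by simp

lemma mu_eigenvalue:
  assumes sg: "simple_graph V E" and ne: "V \<noteq> {}"
  shows "eigenvalue_on V (adj E) (mu V E)"
proof -
  have fin: "finite V" using sg by (simp add: simple_graph_def)
  have sym: "adj E u w = adj E w u" if "u \<in> V" "w \<in> V" for u w
    using sg that unfolding simple_graph_def adj_def by metis
  obtain c where c: "eigenvalue_on V (\<lambda>u w. complex_of_real (adj E u w)) c"
    using ex_complex_eigenvalue_on[OF fin ne] by blast
  have "eigenvalue_on V (adj E) (Re c)"
    using eigenvalue_on_Re_of_symmetric[OF fin sym c] .
  then show ?thesis
    unfolding mu_def adj_eigenvalues_eq using finite_eigenvalue_on[OF fin]
    by (metis Max_in empty_iff mem_Collect_eq)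
qed

lemma eigenvalue_le_mu:
  assumes "finite V" and "eigenvalue_on V (adj E) lam"
  shows "lam \<le> mu V E"
  unfolding mu_def adj_eigenvalues_eq
  by (rule Max_ge[OF finite_eigenvalue_on[OF assms(1)]]) (simp add: assms(2))

lemma quad_form_eigenvector:
  assumes "\<And>u. u \<in> V \<Longrightarrow> (\<Sum>w\<in>V. adj E u w * x w) = lam * x u"
  shows "quad_form V E x = lam * sq_norm V x"
proof -
  have "quad_form V E x = (\<Sum>u\<in>V. x u * (\<Sum>w\<in>V. adj E u w * x w))"
    unfolding quad_form_def by (simp add: sum_distrib_left mult_ac)
  also have "\<dots> = (\<Sum>u\<in>V. lam * (x u)\<^sup>2)"
    using assms by (intro sum.cong) (auto simp: power2_eq_square)
  finally show ?thesis unfolding sq_norm_def by (simp add: sum_distrib_left)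
qed

lemma quad_form_le_abs: "quad_form V E x \<le> quad_form V E (\<lambda>u. \<bar>x u\<bar>)"
  unfolding quad_form_def adj_def
  by (intro sum_mono) (simp add: abs_mult[symmetric] abs_ge_self)

lemma quad_form_mono:
  assumes "\<And>u w. u \<in> V \<Longrightarrow> w \<in> V \<Longrightarrow> E u w \<Longrightarrow> F u w" and "\<And>u. u \<in> V \<Longrightarrow> 0 \<le> x u"
  shows "quad_form V E x \<le> quad_form V F x"
  unfolding quad_form_def adj_def using assms by (intro sum_mono) auto

lemma quad_form_remove:
  assumes fin: "finite U" and v: "v \<in> U" and irrefl: "\<not> F v v"
    and sym: "\<And>u. u \<in> U \<Longrightarrow> F u v \<longleftrightarrow> F v u"
  shows "quad_form U F x = quad_form (U - {v}) F x + 2 * x v * (\<Sum>w\<in>U - {v}. adj F v w * x w)"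
proof -
  have split: "(\<Sum>w\<in>U. g w) = g v + (\<Sum>w\<in>U - {v}. g w)" for g :: "'a \<Rightarrow> real"
    using sum.remove[OF fin v] .
  have "quad_form U F x = (\<Sum>w\<in>U - {v}. adj F v w * x v * x w)
      + (\<Sum>u\<in>U - {v}. adj F u v * x u * x v + (\<Sum>w\<in>U - {v}. adj F u w * x u * x w))"
    unfolding quad_form_def split using irrefl by (simp add: adj_def)
  also have "\<dots> = quad_form (U - {v}) F x + 2 * x v * (\<Sum>w\<in>U - {v}. adj F v w * x w)"
    unfolding quad_form_def sum.distrib using sym
    by (simp add: adj_def sum_distrib_left mult_ac)
  finally show ?thesis .
qed

lemma quad_form_split_edge:
  assumes fin: "finite U" and DU: "D \<subseteq> U"
  shows "quad_form U (split_edge D) y =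
    (\<Sum>u\<in>D. y u)\<^sup>2 - (\<Sum>u\<in>D. (y u)\<^sup>2) + 2 * (\<Sum>u\<in>D. y u) * (\<Sum>u\<in>U - D. y u)"
proof -
  have finD: "finite D" using fin DU finite_subset by blast
  have split: "(\<Sum>w\<in>U. g w) = (\<Sum>w\<in>D. g w) + (\<Sum>w\<in>U - D. g w)" for g :: "'a \<Rightarrow> real"
    using sum.subset_diff[OF DU fin] by (simp add: add.commute)
  have in_D: "(\<Sum>w\<in>U. adj (split_edge D) u w * y u * y w) =
      y u * (\<Sum>w\<in>D. y w) - (y u)\<^sup>2 + y u * (\<Sum>w\<in>U - D. y w)" if u: "u \<in> D" for u
  proof -
    have "(\<Sum>w\<in>D. adj (split_edge D) u w * y u * y w) = (\<Sum>w\<in>D - {u}. y u * y w)"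
      unfolding sum.remove[OF finD u] by (auto simp: adj_def split_edge_def split: if_splits intro!: sum.cong)
    moreover have "(\<Sum>w\<in>U - D. adj (split_edge D) u w * y u * y w) = y u * (\<Sum>w\<in>U - D. y w)"
      using u by (auto simp: adj_def split_edge_def sum_distrib_left intro!: sum.cong)
    ultimately show ?thesis
      unfolding split using u finD by (simp add: sum_diff1 sum_distrib_left power2_eq_square)
  qed
  have off_D: "(\<Sum>w\<in>U. adj (split_edge D) u w * y u * y w) = y u * (\<Sum>w\<in>D. y w)"
    if "u \<in> U - D" for u
  proof -
    have "(\<Sum>w\<in>D. adj (split_edge D) u w * y u * y w) = y u * (\<Sum>w\<in>D. y w)"
      using that by (auto simp: adj_def split_edge_def sum_distrib_left intro!: sum.cong)
    then show ?thesis unfolding split using that by (simp add: adj_def split_edge_def)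
  qed
  have "quad_form U (split_edge D) y = (\<Sum>u\<in>D. \<Sum>w\<in>U. adj (split_edge D) u w * y u * y w)
      + (\<Sum>u\<in>U - D. \<Sum>w\<in>U. adj (split_edge D) u w * y u * y w)"
    unfolding quad_form_def by (rule split)
  also have "\<dots> = (\<Sum>u\<in>D. y u * (\<Sum>w\<in>D. y w) - (y u)\<^sup>2 + y u * (\<Sum>w\<in>U - D. y w))
      + (\<Sum>u\<in>U - D. y u * (\<Sum>w\<in>D. y w))"
    using in_D off_D by simp
  finally show ?thesis
    by (simp add: sum.distrib sum_subtractf power2_eq_square flip: sum_distrib_right)
qed

section \<open>Degenerate graphs are dominated by split graphs\<close>

lemma sum_le_top_set:
  fixes x :: "'a \<Rightarrow> real"
  assumes fin: "finite U" and NU: "N \<subseteq> U" and DU: "D \<subseteq> U" and card: "card N \<le> card D"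
    and top: "top_set U x D" and nonneg: "\<And>u. u \<in> U \<Longrightarrow> 0 \<le> x u"
  shows "(\<Sum>u\<in>N. x u) \<le> (\<Sum>u\<in>D. x u)"
proof -
  have finN: "finite N" and finD: "finite D" using fin NU DU finite_subset by auto
  have "card (N - D) \<le> card (D - N)"
    using card card_Diff_subset_Int[of N D] card_Diff_subset_Int[of D N] finN finD
    by (simp add: Int_commute)
  then obtain g where g: "g ` (N - D) \<subseteq> D - N" "inj_on g (N - D)"
    using card_le_inj finN finD by (meson finite_Diff)
  have "(\<Sum>u\<in>N - D. x u) \<le> (\<Sum>u\<in>N - D. x (g u))"
    using top g(1) NU unfolding top_set_def by (intro sum_mono) blast
  also have "\<dots> = (\<Sum>u\<in>g ` (N - D). x u)"
    by (simp add: sum.reindex[OF g(2)])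
  also have "\<dots> \<le> (\<Sum>u\<in>D - N. x u)"
    using g(1) finD nonneg DU by (intro sum_mono2) auto
  finally show ?thesis
    using sum.Int_Diff[OF finN, of x D] sum.Int_Diff[OF finD, of x N] by (simp add: Int_commute)
qed

lemma sum_adj_le_top_set:
  fixes x :: "'a \<Rightarrow> real"
  assumes fin: "finite U" and DU: "D \<subseteq> U" and v: "v \<notin> U" and top: "top_set U x D"
    and deg: "card {w\<in>U. E v w} \<le> card D" and nonneg: "\<And>u. u \<in> U \<Longrightarrow> 0 \<le> x u"
  shows "(\<Sum>w\<in>U. adj E v w * x w) \<le> (\<Sum>w\<in>U. adj (split_edge D) v w * x w)"
proof -
  have "(\<Sum>w\<in>U. adj E v w * x w) = (\<Sum>w\<in>{w\<in>U. E v w}. x w)"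
    unfolding sum.inter_filter[OF fin] adj_def by (intro sum.cong) auto
  also have "\<dots> \<le> (\<Sum>w\<in>D. x w)"
    using deg by (intro sum_le_top_set[OF fin _ DU _ top nonneg]) auto
  also have "\<dots> = (\<Sum>w\<in>U. adj (split_edge D) v w * x w)"
    using DU fin v by (intro sum.mono_neutral_cong_left) (auto simp: adj_def split_edge_def)
  finally show ?thesis .
qed

lemma quad_form_split_edge_swap:
  fixes x :: "'a \<Rightarrow> real"
  assumes fin: "finite U" and DU: "D \<subseteq> U" and w: "w \<in> D" and v: "v \<in> U - D"
    and nonneg: "\<And>u. u \<in> U \<Longrightarrow> 0 \<le> x u" and le: "x w \<le> x v"
  shows "quad_form U (split_edge D) x \<le> quad_form U (split_edge (insert v (D - {w}))) x"
proof -
  define D' where "D' = insert v (D - {w})"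
  have finD: "finite D" using fin DU finite_subset by blast
  have D'U: "D' \<subseteq> U" unfolding D'_def using DU v by auto
  define A where "A = (\<Sum>u\<in>D. x u)"
  define S where "S = (\<Sum>u\<in>D. (x u)\<^sup>2)"
  define B where "B = (\<Sum>u\<in>U - D - {v}. x u)"
  have "U - D' = insert w (U - D - {v})" unfolding D'_def using w v DU by auto
  then have rest': "(\<Sum>u\<in>U - D'. x u) = B + x w"
    unfolding B_def using fin w by simp
  have rest: "(\<Sum>u\<in>U - D. x u) = B + x v"
    unfolding B_def using fin v by (simp add: sum_diff1)
  have "quad_form U (split_edge D') x - quad_form U (split_edge D) x = 2 * (x v - x w) * B"
    unfolding quad_form_split_edge[OF fin DU] quad_form_split_edge[OF fin D'U] rest rest'
    unfolding D'_def using v w finD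
    by (simp add: sum_diff1 A_def[symmetric] S_def[symmetric] power2_eq_square algebra_simps)
  moreover have "0 \<le> B" unfolding B_def using nonneg by (intro sum_nonneg) auto
  then have "0 \<le> 2 * (x v - x w) * B" using le by simp
  ultimately show ?thesis unfolding D'_def by linarith
qed

lemma top_set_insert:
  fixes x :: "'a \<Rightarrow> real"
  assumes fin: "finite U" and v: "v \<in> U" and D'U: "D' \<subseteq> U - {v}"
    and top': "top_set (U - {v}) x D'" and nonneg: "\<And>u. u \<in> U \<Longrightarrow> 0 \<le> x u"
  shows "\<exists>D\<subseteq>U. card D = card D' \<and> top_set U x D \<and>
    quad_form U (split_edge D') x \<le> quad_form U (split_edge D) x"
proof (cases "\<forall>d\<in>D'. x v \<le> x d")
  case True
  then have "top_set U x D'" using top' unfolding top_set_def by auto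
  then show ?thesis using D'U by blast
next
  case False
  have finD': "finite D'" using fin D'U finite_subset by blast
  have "D' \<noteq> {}" using False by auto
  then have "Min (x ` D') \<in> x ` D'" using finD' by simp
  then obtain w where w: "w \<in> D'" "x w = Min (x ` D')" by (metis imageE)
  have w_min: "x w \<le> x d" if "d \<in> D'" for d
    using w finD' that by simp
  have w_less: "x w < x v" using False w_min by force
  define D where "D = insert v (D' - {w})"
  have "top_set U x D"
    unfolding top_set_def
  proof (intro ballI)
    fix d r assume d: "d \<in> D" and r: "r \<in> U - D"
    then have "r = w \<or> r \<in> U - {v} - D'" unfolding D_def by auto
    then show "x r \<le> x d"
      using d w_min w_less w(1) top' unfolding top_set_def D_def by force
  qed
  moreover have "card D = card D'"
  proof -
    have "v \<notin> D' - {w}" using D'U by auto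
    then have "card D = Suc (card (D' - {w}))" unfolding D_def using finD' by simp
    then show ?thesis using card_Suc_Diff1[OF finD' w(1)] by simp
  qed
  moreover have "quad_form U (split_edge D') x \<le> quad_form U (split_edge D) x"
    unfolding D_def using D'U w(1) v nonneg w_less
    by (intro quad_form_split_edge_swap[OF fin]) auto
  moreover have "D \<subseteq> U" unfolding D_def using D'U v by auto
  ultimately show ?thesis by blast
qed

lemma degenerate_quad_form_le_split_edge:
  fixes x :: "'a \<Rightarrow> real"
  assumes sg: "simple_graph V E" and dg: "degenerate k V E"
    and nonneg: "\<And>u. u \<in> V \<Longrightarrow> 0 \<le> x u" and UV: "U \<subseteq> V" and k: "k \<le> card U"
  shows "\<exists>D\<subseteq>U. card D = k \<and> top_set U x D \<and> quad_form U E x \<le> quad_form U (split_edge D) x"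
proof -
  have finV: "finite V" and sym: "\<And>u w. u \<in> V \<Longrightarrow> w \<in> V \<Longrightarrow> E u w \<Longrightarrow> E w u"
    and irrefl: "\<And>u. u \<in> V \<Longrightarrow> \<not> E u u"
    using sg unfolding simple_graph_def by auto
  have "finite U" using UV finV finite_subset by blast
  from this k show ?thesis
  proof (induction U rule: finite_remove_induct)
    case empty
    then show ?case by (auto simp: top_set_def quad_form_def)
  next
    case (remove A)
    have AV: "A \<subseteq> V" using remove.hyps(3) UV by blast
    have nonneg_A: "\<And>u. u \<in> A \<Longrightarrow> 0 \<le> x u" using nonneg AV by blast
    show ?case
    proof (cases "card A = k")
      case True
      have "quad_form A E x \<le> quad_form A (split_edge A) x"
        using irrefl AV nonneg_A by (intro quad_form_mono) (auto simp: split_edge_def)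
      then show ?thesis using True by (intro exI[of _ A]) (auto simp: top_set_def)
    next
      case False
      obtain v where v: "v \<in> A" and deg_v: "card {w\<in>A. E v w} \<le> k"
        using dg AV remove.hyps(2) unfolding degenerate_def
        by (elim allE[where x = A] allE[where x = E]) auto
      have "k \<le> card (A - {v})" using remove.prems False v remove.hyps(1) by simp
      then obtain D' where D': "D' \<subseteq> A - {v}" "card D' = k" "top_set (A - {v}) x D'"
        and IH: "quad_form (A - {v}) E x \<le> quad_form (A - {v}) (split_edge D') x"
        using remove.IH[OF v] by blast
      have finA: "finite A" by (rule remove.hyps(1))
      have "card {w\<in>A - {v}. E v w} \<le> card {w\<in>A. E v w}"
        using finA by (intro card_mono) auto
      then have "(\<Sum>w\<in>A - {v}. adj E v w * x w) \<le> (\<Sum>w\<in>A - {v}. adj (split_edge D') v w * x w)"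
        using deg_v D' finA nonneg_A by (intro sum_adj_le_top_set) auto
      then have "2 * x v * (\<Sum>w\<in>A - {v}. adj E v w * x w)
          \<le> 2 * x v * (\<Sum>w\<in>A - {v}. adj (split_edge D') v w * x w)"
        using nonneg_A[OF v] by (intro mult_left_mono) auto
      moreover have "quad_form A E x = quad_form (A - {v}) E x + 2 * x v * (\<Sum>w\<in>A - {v}. adj E v w * x w)"
        using irrefl sym AV v by (intro quad_form_remove[OF finA v]) blast+
      moreover have "quad_form A (split_edge D') x =
          quad_form (A - {v}) (split_edge D') x + 2 * x v * (\<Sum>w\<in>A - {v}. adj (split_edge D') v w * x w)"
        by (intro quad_form_remove[OF finA v]) (auto simp: split_edge_def)
      ultimately have "quad_form A E x \<le> quad_form A (split_edge D') x" using IH by linarith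
      moreover obtain D where "D \<subseteq> A" "card D = card D'" "top_set A x D"
        and "quad_form A (split_edge D') x \<le> quad_form A (split_edge D) x"
        using top_set_insert[OF finA v D'(1,3) nonneg_A] by blast
      ultimately show ?thesis using D'(2) by (intro exI[of _ D]) auto
    qed
  qed
qed

lemma degenerate_edge_count:
  assumes sg: "simple_graph V E" and dg: "degenerate k V E" and DV: "D \<subseteq> V" and cD: "card D = k"
  shows "quad_form V E (\<lambda>_. 1) \<le> quad_form V (split_edge D) (\<lambda>_. 1)"
proof -
  have fin: "finite V" using sg by (simp add: simple_graph_def)
  have "k \<le> card V" using card_mono[OF fin DV] cD by simp
  then obtain D' where D': "D' \<subseteq> V" "card D' = k"
    and "quad_form V E (\<lambda>_. 1) \<le> quad_form V (split_edge D') (\<lambda>_. 1)"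
    using degenerate_quad_form_le_split_edge[OF sg dg, of "\<lambda>_. 1" V] by auto
  moreover have "quad_form V (split_edge D') (\<lambda>_. 1) = quad_form V (split_edge D) (\<lambda>_. 1)"
    using D' DV cD fin
    by (simp add: quad_form_split_edge card_Diff_subset finite_subset)
  ultimately show ?thesis by simp
qed

section \<open>The spectral radius of the complete split graph\<close>

definition split_radius :: "nat \<Rightarrow> nat \<Rightarrow> real" where
  "split_radius n k = (real k - 1 + sqrt ((real k - 1)\<^sup>2 + 4 * real k * (real n - real k))) / 2"

lemma split_radius_root:
  assumes "k \<le> n"
  shows "(split_radius n k)\<^sup>2 = (real k - 1) * split_radius n k + real k * (real n - real k)"
proof -
  define c where "c = real k - 1"
  define q where "q = c\<^sup>2 + 4 * real k * (real n - real k)"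
  have "0 \<le> q" unfolding q_def using assms by simp
  then have "(sqrt q)\<^sup>2 = q" by simp
  then show ?thesis
    unfolding split_radius_def c_def[symmetric] q_def[symmetric]
    by (simp add: q_def power2_eq_square field_simps)
qed

lemma split_radius_lower:
  assumes "k \<le> n"
  shows "real k - 1 \<le> split_radius n k" and "0 \<le> split_radius n k"
proof -
  have "\<bar>real k - 1\<bar> \<le> sqrt ((real k - 1)\<^sup>2 + 4 * real k * (real n - real k))"
    unfolding real_sqrt_abs[symmetric] using assms by (intro real_sqrt_le_mono) simp
  then show "real k - 1 \<le> split_radius n k" and "0 \<le> split_radius n k"
    by (simp_all add: split_radius_def)
qed

lemma split_radius_complete: "1 \<le> k \<Longrightarrow> split_radius k k = real k - 1"
  unfolding split_radius_def by simp

lemma split_radius_ge: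
  assumes "1 \<le> k" and "k < n"
  shows "real k \<le> split_radius n k" and "k + 2 \<le> n \<Longrightarrow> real k < split_radius n k"
proof -
  define r where "r = split_radius n k"
  have root: "(r - real k) * (r + 1) = real k * (real n - real k - 1)"
    using split_radius_root[of k n] assms unfolding r_def by (simp add: power2_eq_square algebra_simps)
  have "0 < r + 1" unfolding r_def using split_radius_lower(2)[of k n] assms by simp
  moreover have "0 \<le> real k * (real n - real k - 1)" using assms by simp
  ultimately show "real k \<le> r" using root by (smt (verit) mult_neg_pos)
  assume "k + 2 \<le> n"
  then have "0 < real k * (real n - real k - 1)" using assms by simp
  then show "real k < r" using root \<open>0 < r + 1\<close> by (smt (verit) mult_nonpos_nonneg)
qed

lemma split_form_le:
  fixes a b sa sb r k m :: real
  assumes root: "r\<^sup>2 = (k - 1) * r + k * m" and r: "k - 1 \<le> r" "0 \<le> r"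
    and k: "0 \<le> k" and m: "0 \<le> m" and sa: "0 \<le> sa" and sb: "0 \<le> sb"
    and a: "a\<^sup>2 \<le> k * sa" and b: "b\<^sup>2 \<le> m * sb"
  shows "a\<^sup>2 - sa + 2 * a * b \<le> r * (sa + sb)"
proof (cases "k = 0 \<or> m = 0")
  case True
  then have "2 * a * b = 0" using a b sa sb by auto
  moreover have "k * sa \<le> (1 + r) * sa" using r(1) sa by (intro mult_right_mono) auto
  moreover have "0 \<le> r * sb" using r(2) sb by simp
  ultimately have "a\<^sup>2 - sa + 2 * a * b \<le> r * sa + r * sb"
    using a by (simp only: distrib_right mult_1_left)
  then show ?thesis by (simp add: distrib_left)
next
  case False
  then have "k > 0" "m > 0" using k m by auto
  then have "r > 0" using root r(2) by (cases "r = 0") (auto simp: power2_eq_square)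
  \<comment> \<open>AM-GM with the weight \<open>m / r\<close>, which exactly balances the two Cauchy-Schwarz bounds\<close>
  have amgm: "2 * a * b \<le> m / r * a\<^sup>2 + r / m * b\<^sup>2"
  proof -
    have "0 \<le> (m * a - r * b)\<^sup>2 / (r * m)" using \<open>r > 0\<close> \<open>m > 0\<close> by simp
    then show ?thesis using \<open>r > 0\<close> \<open>m > 0\<close> by (simp add: field_simps power2_eq_square)
  qed
  have weight: "(1 + m / r) * k = r + 1"
    using root \<open>r > 0\<close> by (simp add: field_simps power2_eq_square)
  have "a\<^sup>2 - sa + 2 * a * b \<le> (1 + m / r) * a\<^sup>2 - sa + r / m * b\<^sup>2"
    using amgm by (simp add: algebra_simps)
  also have "\<dots> \<le> (1 + m / r) * (k * sa) - sa + r / m * (m * sb)"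
    using a b \<open>r > 0\<close> \<open>m > 0\<close> by (intro add_mono diff_mono mult_left_mono) auto
  also have "\<dots> = r * (sa + sb)"
  proof -
    have "(1 + m / r) * (k * sa) = (r + 1) * sa" by (simp only: weight flip: mult.assoc)
    moreover have "r / m * (m * sb) = r * sb" using \<open>m > 0\<close> by simp
    ultimately show ?thesis by (simp add: algebra_simps)
  qed
  finally show ?thesis .
qed

lemma quad_form_split_edge_le:
  fixes y :: "'a \<Rightarrow> real"
  assumes fin: "finite U" and DU: "D \<subseteq> U" and cD: "card D = k" and cU: "card U = n"
  shows "quad_form U (split_edge D) y \<le> split_radius n k * sq_norm U y"
proof -
  have finD: "finite D" using fin DU finite_subset by blast
  have kn: "k \<le> n" using card_mono[OF fin DU] cD cU by simp
  have cUD: "card (U - D) = n - k" using card_Diff_subset[OF finD DU] cD cU by simp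
  have norm: "sq_norm U y = (\<Sum>u\<in>D. (y u)\<^sup>2) + (\<Sum>u\<in>U - D. (y u)\<^sup>2)"
    unfolding sq_norm_def using sum.subset_diff[OF DU fin] by (simp add: add.commute)
  have cauchy_D: "(\<Sum>u\<in>D. y u)\<^sup>2 \<le> real k * (\<Sum>u\<in>D. (y u)\<^sup>2)"
    using sum_squared_le_sum_of_squares[of y D] cD by (simp add: mult.commute)
  have cauchy_rest: "(\<Sum>u\<in>U - D. y u)\<^sup>2 \<le> (real n - real k) * (\<Sum>u\<in>U - D. (y u)\<^sup>2)"
    using sum_squared_le_sum_of_squares[of y "U - D"] cUD kn by (simp add: mult.commute of_nat_diff)
  show ?thesis
    unfolding quad_form_split_edge[OF fin DU] norm
    by (rule split_form_le[OF split_radius_root[OF kn] split_radius_lower[OF kn] _ _ _ _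
          cauchy_D cauchy_rest]) (use kn in \<open>simp_all add: sum_nonneg\<close>)
qed

lemma sum_adj_split_edge_mem:
  assumes fin: "finite U" and u: "u \<in> U" "u \<in> D"
  shows "(\<Sum>w\<in>U. adj (split_edge D) u w * z w) = (\<Sum>w\<in>U. z w) - z u"
proof -
  have "(\<Sum>w\<in>U. adj (split_edge D) u w * z w) = (\<Sum>w\<in>U - {u}. z w)"
    unfolding sum.remove[OF fin u(1)] using u
    by (auto simp: adj_def split_edge_def split: if_split_asm intro!: sum.cong)
  then show ?thesis using fin u by (simp add: sum_diff1)
qed

lemma sum_adj_split_edge_not_mem:
  assumes fin: "finite U" and DU: "D \<subseteq> U" and u: "u \<notin> D"
  shows "(\<Sum>w\<in>U. adj (split_edge D) u w * z w) = (\<Sum>w\<in>D. z w)"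
  using fin DU u by (intro sum.mono_neutral_cong_right) (auto simp: adj_def split_edge_def)

lemma split_radius_eigenvalue:
  assumes k: "1 \<le> k" and kn: "k \<le> n"
  shows "eigenvalue_on {0..<n} (adj (S_edge k)) (split_radius n k)"
proof -
  define r where "r = split_radius n k"
  define U where "U = {0..<n}"
  define D where "D = {0..<k}"
  have DU: "D \<subseteq> U" and fin: "finite U" unfolding D_def U_def using kn by auto
  have S: "S_edge k = split_edge D" by (auto simp: fun_eq_iff S_edge_def split_edge_def D_def)
  have r_pos: "0 < r" if "k < n" using split_radius_ge(1)[OF k that] k unfolding r_def by simp
  define z where "z w = (if w < k then 1 else real k / r)" for w
  have "(\<Sum>w\<in>U. z w) = (\<Sum>w\<in>D. z w) + (\<Sum>w\<in>U - D. z w)"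
    using sum.subset_diff[OF DU fin] by (simp add: add.commute)
  also have "\<dots> = real k + (real n - real k) * (real k / r)"
    using kn by (simp add: z_def D_def U_def of_nat_diff)
  also have "\<dots> = r + 1"
  proof (cases "k = n")
    case True
    then show ?thesis using split_radius_complete[OF k] unfolding r_def by simp
  next
    case False
    then have "0 < r" using r_pos kn by simp
    then show ?thesis
      using split_radius_root[OF kn] unfolding r_def[symmetric]
      by (simp add: field_simps power2_eq_square)
  qed
  finally have sum_z: "(\<Sum>w\<in>U. z w) = r + 1" .
  have "(\<Sum>w\<in>U. adj (split_edge D) u w * z w) = r * z u" if u: "u \<in> U" for u
  proof (cases "u \<in> D")
    case True
    then show ?thesis
      using sum_adj_split_edge_mem[OF fin u True] sum_z by (simp add: z_def D_def)
  next
    case False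
    then have "k < n" "\<not> u < k" using u unfolding U_def D_def by auto
    then show ?thesis
      using sum_adj_split_edge_not_mem[OF fin DU False] r_pos by (simp add: z_def D_def)
  qed
  moreover have "0 \<in> U" "z 0 \<noteq> 0" unfolding U_def z_def using k kn by auto
  ultimately show ?thesis
    unfolding eigenvalue_on_def S r_def[symmetric] U_def[symmetric] by blast
qed

section \<open>The equality case\<close>

lemma quad_form_add:
  assumes sym: "\<And>u w. u \<in> U \<Longrightarrow> w \<in> U \<Longrightarrow> F u w \<longleftrightarrow> F w u"
  shows "quad_form U F (\<lambda>w. x w + y w) =
    quad_form U F x + 2 * (\<Sum>u\<in>U. y u * (\<Sum>w\<in>U. adj F u w * x w)) + quad_form U F y"
proof -
  have "(\<Sum>u\<in>U. \<Sum>w\<in>U. adj F u w * x u * y w) = (\<Sum>w\<in>U. \<Sum>u\<in>U. adj F w u * y w * x u)"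
    using sym by (subst sum.swap) (auto simp: adj_def mult_ac intro!: sum.cong)
  then show ?thesis
    unfolding quad_form_def
    by (simp add: algebra_simps sum.distrib sum_distrib_left)
qed

lemma eq_0_if_quadratic_nonneg:
  fixes c d :: real
  assumes "\<And>t. 0 \<le> 2 * t * c + t\<^sup>2 * d"
  shows "c = 0"
proof -
  define e where "e = \<bar>d\<bar> + 1"
  have e: "0 < e" "d < 2 * e" unfolding e_def by (auto simp: abs_if)
  have "0 \<le> (2 * (- c / e) * c + (- c / e)\<^sup>2 * d) * e\<^sup>2" using assms[of "- c / e"] by simp
  also have "\<dots> = c\<^sup>2 * (d - 2 * e)"
    using e(1) by (simp add: field_simps power2_eq_square)
  finally show "c = 0" using e(2) by (auto simp: zero_le_mult_iff)
qed

lemma eigenvector_if_quad_form_max: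
  assumes fin: "finite U" and F_sym: "\<And>u w. u \<in> U \<Longrightarrow> w \<in> U \<Longrightarrow> F u w \<longleftrightarrow> F w u"
    and bound: "\<And>y. quad_form U F y \<le> r * sq_norm U y"
    and max: "quad_form U F x = r * sq_norm U x" and u: "u \<in> U"
  shows "(\<Sum>w\<in>U. adj F u w * x w) = r * x u"
proof -
  define g where "g = (\<Sum>w\<in>U. adj F u w * x w)"
  have "0 \<le> 2 * t * (r * x u - g) + t\<^sup>2 * (r - adj F u u)" for t
  proof -
    define y where "y w = (if w = u then t else 0)" for w
    have "y v * (\<Sum>w\<in>U. adj F v w * x w) = (if v = u then t * g else 0)" for v
      by (simp add: y_def g_def)
    then have cross: "(\<Sum>v\<in>U. y v * (\<Sum>w\<in>U. adj F v w * x w)) = t * g"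
      using fin u by simp
    have "adj F a b * y a * y b = (if b = u then if a = u then t\<^sup>2 * adj F u u else 0 else 0)" for a b
      by (simp add: y_def power2_eq_square)
    then have "quad_form U F y = t\<^sup>2 * adj F u u"
      unfolding quad_form_def using fin u by simp
    then have "quad_form U F (\<lambda>w. x w + y w) = quad_form U F x + 2 * (t * g) + t\<^sup>2 * adj F u u"
      using quad_form_add[OF F_sym, where x = x and y = y] cross by simp
    moreover have "(x w + y w)\<^sup>2 = (x w)\<^sup>2 + (if w = u then 2 * t * x u + t\<^sup>2 else 0)" for w
      by (simp add: y_def power2_eq_square algebra_simps)
    then have "sq_norm U (\<lambda>w. x w + y w) = sq_norm U x + 2 * t * x u + t\<^sup>2"
      unfolding sq_norm_def using fin u by (simp add: sum.distrib)
    ultimately have "quad_form U F x + 2 * (t * g) + t\<^sup>2 * adj F u u \<le> r * (sq_norm U x + 2 * t * x u + t\<^sup>2)"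
      using bound[of "\<lambda>w. x w + y w"] by simp
    then show ?thesis using max by (simp add: algebra_simps)
  qed
  then have "r * x u - g = 0" by (rule eq_0_if_quadratic_nonneg)
  then show ?thesis unfolding g_def by simp
qed

lemma split_edge_eigenvector_values:
  assumes fin: "finite V" and DV: "D \<subseteq> V" and cD: "card D = k" and cV: "card V = n"
    and k: "1 \<le> k" and nonneg: "\<And>u. u \<in> V \<Longrightarrow> 0 \<le> x u" and nz: "\<exists>v\<in>V. x v \<noteq> 0"
    and ev: "\<And>u. u \<in> V \<Longrightarrow> (\<Sum>w\<in>V. adj (split_edge D) u w * x w) = split_radius n k * x u"
  shows "\<exists>al be. 0 < be \<and> be \<le> al \<and> (\<forall>u\<in>D. x u = al) \<and> (\<forall>u\<in>V - D. x u = be) \<and>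
    (2 \<le> card (V - D) \<longrightarrow> be < al)"
proof -
  define r where "r = split_radius n k"
  have finD: "finite D" using fin DV finite_subset by blast
  have kn: "k \<le> n" using card_mono[OF fin DV] cD cV by simp
  have cVD: "card (V - D) = n - k" using card_Diff_subset[OF finD DV] cD cV by simp
  have r_ge: "real k \<le> r" if "V - D \<noteq> {}"
  proof -
    have "0 < card (V - D)" using that fin by (simp add: card_gt_0_iff)
    then show ?thesis using split_radius_ge(1)[OF k] cVD unfolding r_def by simp
  qed
  define al where "al = (\<Sum>w\<in>V. x w) / (r + 1)"
  define be where "be = real k * al / r"
  have on_D: "x u = al" if "u \<in> D" for u
  proof -
    have "(\<Sum>w\<in>V. x w) - x u = r * x u"
      using ev[of u] sum_adj_split_edge_mem[OF fin _ that] that DV unfolding r_def by auto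
    moreover have "0 \<le> r" unfolding r_def using split_radius_lower(2)[OF kn] .
    ultimately show ?thesis unfolding al_def by (simp add: field_simps)
  qed
  have off_D: "r * x u = real k * al" if "u \<in> V - D" for u
    using ev[of u] sum_adj_split_edge_not_mem[OF fin DV, of u x] on_D cD that
    unfolding r_def by simp
  obtain v where v: "v \<in> V" "x v \<noteq> 0" using nz by blast
  then have "0 < (\<Sum>w\<in>V. x w)" using nonneg[of v] by (intro sum_pos2[OF fin v(1)]) (auto intro: nonneg)
  moreover have "0 \<le> r" unfolding r_def using split_radius_lower(2)[OF kn] .
  ultimately have al: "0 < al" unfolding al_def by simp
  show ?thesis
  proof (cases "V - D = {}")
    case True
    then show ?thesis unfolding True using al on_D by (intro exI[of _ al]) auto
  next
    case False
    have "be \<le> al" "0 < be" "2 \<le> card (V - D) \<longrightarrow> be < al"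
      using r_ge[OF False] split_radius_ge(2)[OF k] al k cVD
      unfolding be_def r_def by (auto simp: field_simps)
    moreover have "\<forall>u\<in>V - D. x u = be"
      using off_D r_ge[OF False] k unfolding be_def by (auto simp: field_simps)
    ultimately show ?thesis using on_D by blast
  qed
qed

lemma member_le_double_sum:
  fixes f :: "'a \<Rightarrow> 'a \<Rightarrow> real"
  assumes fin: "finite V" and nonneg: "\<And>a b. a \<in> V \<Longrightarrow> b \<in> V \<Longrightarrow> 0 \<le> f a b"
    and u: "u \<in> V" and w: "w \<in> V"
  shows "f u w \<le> (\<Sum>a\<in>V. \<Sum>b\<in>V. f a b)"
proof -
  have "f u w \<le> (\<Sum>b\<in>V. f u b)" using fin nonneg u w by (intro member_le_sum) auto
  also have "\<dots> \<le> (\<Sum>a\<in>V. \<Sum>b\<in>V. f a b)" using fin nonneg u by (intro member_le_sum sum_nonneg) auto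
  finally show ?thesis .
qed

lemma edges_subset_if_quad_form_le:
  assumes fin: "finite V"
    and count: "quad_form V E (\<lambda>_. 1) \<le> quad_form V F (\<lambda>_. 1)"
    and le: "quad_form V F x \<le> quad_form V E x" and c: "0 \<le> c"
    and F_weight: "\<And>u w. u \<in> V \<Longrightarrow> w \<in> V \<Longrightarrow> F u w \<Longrightarrow> c \<le> x u * x w"
    and E_weight: "\<And>u w. u \<in> V \<Longrightarrow> w \<in> V \<Longrightarrow> E u w \<Longrightarrow> \<not> F u w \<Longrightarrow> x u * x w < c"
    and u: "u \<in> V" and w: "w \<in> V" and E: "E u w"
  shows "F u w"
proof (rule ccontr)
  assume not_F: "\<not> F u w"
  define f where "f a b = (adj F a b - adj E a b) * (x a * x b - c)" for a b
  have nonneg: "0 \<le> f a b" if "a \<in> V" "b \<in> V" for a b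
    using F_weight[OF that] E_weight[OF that] unfolding f_def adj_def by force
  have "(\<Sum>a\<in>V. \<Sum>b\<in>V. f a b) =
      (quad_form V F x - quad_form V E x) - c * (quad_form V F (\<lambda>_. 1) - quad_form V E (\<lambda>_. 1))"
    unfolding f_def quad_form_def by (simp add: algebra_simps sum_subtractf sum_distrib_left)
  also have "\<dots> \<le> 0"
    using le count c mult_nonneg_nonneg[of c "quad_form V F (\<lambda>_. 1) - quad_form V E (\<lambda>_. 1)"]
    by linarith
  finally have "f u w \<le> 0" using member_le_double_sum[where f = f, OF fin nonneg u w] by linarith
  then show False using E_weight[OF u w E not_F] E not_F unfolding f_def adj_def by simp
qed

lemma edges_eq_if_quad_form_le:
  assumes fin: "finite V" and sub: "\<And>u w. u \<in> V \<Longrightarrow> w \<in> V \<Longrightarrow> E u w \<Longrightarrow> F u w"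
    and pos: "\<And>u. u \<in> V \<Longrightarrow> 0 < x u" and le: "quad_form V F x \<le> quad_form V E x"
    and u: "u \<in> V" and w: "w \<in> V"
  shows "E u w \<longleftrightarrow> F u w"
proof
  assume F: "F u w"
  define f where "f a b = (adj F a b - adj E a b) * (x a * x b)" for a b
  have nonneg: "0 \<le> f a b" if "a \<in> V" "b \<in> V" for a b
    using sub[OF that] pos[OF that(1)] pos[OF that(2)] unfolding f_def adj_def by auto
  have "(\<Sum>a\<in>V. \<Sum>b\<in>V. f a b) = quad_form V F x - quad_form V E x"
    unfolding f_def quad_form_def by (simp add: algebra_simps sum_subtractf)
  then have "f u w \<le> 0" using member_le_double_sum[where f = f, OF fin nonneg u w] le by linarith
  then show "E u w" using F pos[OF u] pos[OF w] unfolding f_def adj_def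
    by (auto simp: mult_le_0_iff split: if_splits)
qed (rule sub[OF u w])

lemma edges_eq_split_edge_if_extremal:
  assumes sg: "simple_graph V E" and DV: "D \<subseteq> V" and cD: "card D = k" and cV: "card V = n"
    and k: "1 \<le> k" and count: "quad_form V E (\<lambda>_. 1) \<le> quad_form V (split_edge D) (\<lambda>_. 1)"
    and nonneg: "\<And>u. u \<in> V \<Longrightarrow> 0 \<le> x u" and nz: "\<exists>v\<in>V. x v \<noteq> 0"
    and ev: "\<And>u. u \<in> V \<Longrightarrow> (\<Sum>w\<in>V. adj (split_edge D) u w * x w) = split_radius n k * x u"
    and le: "quad_form V (split_edge D) x \<le> quad_form V E x"
    and u: "u \<in> V" and w: "w \<in> V"
  shows "E u w \<longleftrightarrow> split_edge D u w"
proof -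
  have fin: "finite V" and irrefl: "\<And>v. v \<in> V \<Longrightarrow> \<not> E v v"
    using sg by (auto simp: simple_graph_def)
  obtain al be where be: "0 < be" "be \<le> al" and on_D: "\<forall>v\<in>D. x v = al"
    and off_D: "\<forall>v\<in>V - D. x v = be" and gap: "2 \<le> card (V - D) \<longrightarrow> be < al"
    using split_edge_eigenvector_values[where x = x, OF fin DV cD cV k nonneg nz ev] by blast
  have x_ge: "be \<le> x v" and x_le: "x v \<le> al" if "v \<in> V" for v
    using on_D off_D be that by (cases "v \<in> D"; auto)+
  have pos: "0 < x v" if "v \<in> V" for v using x_ge[OF that] be(1) by linarith
  have sub: "split_edge D a b" if ab: "a \<in> V" "b \<in> V" "E a b" for a b
  proof (rule edges_subset_if_quad_form_le[where x = x, OF fin count le _ _ _ ab])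
    show "0 \<le> al * be" using be by simp
    show "al * be \<le> x a * x b" if "a \<in> V" "b \<in> V" "split_edge D a b" for a b
      using that x_ge x_le on_D be unfolding split_edge_def
      by (auto intro: mult_mono mult_mono' simp: mult.commute[of al])
    show "x a * x b < al * be" if a: "a \<in> V" and b: "b \<in> V" "E a b" "\<not> split_edge D a b" for a b
    proof -
      have "a \<noteq> b" "a \<notin> D" "b \<notin> D" using b irrefl[OF a] unfolding split_edge_def by auto
      then have "card {a, b} \<le> card (V - D)" using a b(1) fin by (intro card_mono) auto
      then have "be < al" using gap \<open>a \<noteq> b\<close> by simp
      then show ?thesis using off_D a b(1) \<open>a \<notin> D\<close> \<open>b \<notin> D\<close> be(1) by simp
    qed
  qed
  show ?thesis by (rule edges_eq_if_quad_form_le[where x = x, OF fin sub pos le u w])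
qed

lemma graph_iso_split_edge:
  assumes fin: "finite V" and DV: "D \<subseteq> V" and cD: "card D = k" and cV: "card V = n"
    and E: "\<And>u w. u \<in> V \<Longrightarrow> w \<in> V \<Longrightarrow> E u w \<longleftrightarrow> split_edge D u w"
  shows "graph_iso V E (S_verts n) (S_edge k)"
proof -
  have finD: "finite D" using fin DV finite_subset by blast
  have kn: "k \<le> n" using card_mono[OF fin DV] cD cV by simp
  obtain f1 where f1: "bij_betw f1 D {0..<k}"
    using finite_same_card_bij[OF finD, of "{0..<k}"] cD by auto
  obtain f2 where f2: "bij_betw f2 (V - D) {k..<n}"
    using finite_same_card_bij[of "V - D" "{k..<n}"] fin card_Diff_subset[OF finD DV] cD cV by auto
  define f where "f u = (if u \<in> D then f1 u else f2 u)" for u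
  have "bij_betw f D {0..<k}" using f1 unfolding f_def by (rule bij_betw_cong[THEN iffD1, rotated]) auto
  moreover have "bij_betw f (V - D) {k..<n}"
    using f2 unfolding f_def by (rule bij_betw_cong[THEN iffD1, rotated]) auto
  ultimately have "bij_betw f (D \<union> (V - D)) ({0..<k} \<union> {k..<n})"
    by (rule bij_betw_combine) auto
  moreover have "D \<union> (V - D) = V" "{0..<k} \<union> {k..<n} = {0..<n}" using DV kn by auto
  ultimately have bij: "bij_betw f V {0..<n}" by simp
  have clique: "f u < k \<longleftrightarrow> u \<in> D" if u: "u \<in> V" for u
  proof (cases "u \<in> D")
    case True
    then show ?thesis using bij_betwE[OF f1] by (simp add: f_def)
  next
    case False
    then have "f2 u \<in> {k..<n}" using bij_betwE[OF f2] u by blast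
    then show ?thesis using False by (simp add: f_def)
  qed
  have "E u w \<longleftrightarrow> S_edge k (f u) (f w)" if "u \<in> V" "w \<in> V" for u w
  proof -
    have "f u = f w \<longleftrightarrow> u = w" using bij_betw_imp_inj_on[OF bij] that by (meson inj_on_eq_iff)
    then show ?thesis
      using E[OF that] clique[OF that(1)] clique[OF that(2)] by (simp add: S_edge_def split_edge_def)
  qed
  then show ?thesis unfolding graph_iso_def S_verts_def using bij by (intro exI[of _ f]) simp
qed

lemma degenerate_0_no_edge:
  assumes sg: "simple_graph V E" and dg: "degenerate 0 V E" and u: "u \<in> V" and w: "w \<in> V"
  shows "\<not> E u w"
proof
  assume "E u w"
  moreover have "E w u \<longleftrightarrow> E u w" using sg u w unfolding simple_graph_def by blast
  moreover obtain v where "v \<in> {u, w}" "card {v' \<in> {u, w}. E v v'} \<le> 0"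
    using dg u w unfolding degenerate_def by (elim allE[where x = "{u, w}"] allE[where x = E]) auto
  ultimately show False by auto
qed

lemma degenerate_iso_if_split_radius_le_mu:
  assumes sg: "simple_graph V E" and dg: "degenerate k V E" and cV: "card V = n"
    and k: "1 \<le> k" and kn: "k \<le> n" and le: "split_radius n k \<le> mu V E"
  shows "graph_iso V E (S_verts n) (S_edge k)"
proof -
  define r where "r = split_radius n k"
  have fin: "finite V" using sg by (simp add: simple_graph_def)
  have "V \<noteq> {}" using cV k kn by auto
  then have "eigenvalue_on V (adj E) (mu V E)" by (rule mu_eigenvalue[OF sg])
  then obtain z where nz: "\<exists>v\<in>V. z v \<noteq> 0"
    and ev: "\<And>u. u \<in> V \<Longrightarrow> (\<Sum>w\<in>V. adj E u w * z w) = mu V E * z u"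
    unfolding eigenvalue_on_def by auto
  define x where "x u = \<bar>z u\<bar>" for u
  have nonneg: "\<And>u. u \<in> V \<Longrightarrow> 0 \<le> x u" and norm: "sq_norm V x = sq_norm V z"
    unfolding x_def sq_norm_def by simp_all
  have "\<exists>D\<subseteq>V. card D = k \<and> top_set V x D \<and> quad_form V E x \<le> quad_form V (split_edge D) x"
    by (rule degenerate_quad_form_le_split_edge[OF sg dg nonneg subset_refl]) (use cV kn in simp_all)
  then obtain D where DV: "D \<subseteq> V" and cD: "card D = k"
    and qD: "quad_form V E x \<le> quad_form V (split_edge D) x"
    by auto
  have bound: "\<And>y. quad_form V (split_edge D) y \<le> r * sq_norm V y"
    unfolding r_def by (rule quad_form_split_edge_le[OF fin DV cD cV])
  \<comment> \<open>the chain \<open>\<mu> |z|\<^sup>2 \<le> q\<^sub>E(x) \<le> q\<^sub>D(x) \<le> r |z|\<^sup>2 \<le> \<mu> |z|\<^sup>2\<close> collapses to equalities\<close>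
  have "mu V E * sq_norm V z \<le> quad_form V E x"
    using quad_form_eigenvector[OF ev] quad_form_le_abs[of V E z] unfolding x_def by simp
  moreover have "r * sq_norm V z \<le> mu V E * sq_norm V z"
    using le unfolding r_def sq_norm_def by (intro mult_right_mono) (auto intro: sum_nonneg)
  moreover have "quad_form V (split_edge D) x \<le> r * sq_norm V z" using bound[of x] norm by simp
  ultimately have max: "quad_form V (split_edge D) x = r * sq_norm V x"
    and le_E: "quad_form V (split_edge D) x \<le> quad_form V E x"
    using qD unfolding norm by linarith+
  have "\<exists>v\<in>V. x v \<noteq> 0" using nz unfolding x_def by simp
  moreover have "(\<Sum>w\<in>V. adj (split_edge D) u w * x w) = split_radius n k * x u" if "u \<in> V" for u
    using eigenvector_if_quad_form_max[OF fin _ bound max that] unfolding r_def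
    by (auto simp: split_edge_def)
  moreover have "quad_form V E (\<lambda>_. 1) \<le> quad_form V (split_edge D) (\<lambda>_. 1)"
    by (rule degenerate_edge_count[OF sg dg DV cD])
  ultimately have "E u w \<longleftrightarrow> split_edge D u w" if "u \<in> V" "w \<in> V" for u w
    using edges_eq_split_edge_if_extremal[where x = x, OF sg DV cD cV k _ nonneg _ _ le_E that] by simp
  then show ?thesis by (rule graph_iso_split_edge[OF fin DV cD cV])
qed

theorem theorem1:
  fixes V :: "'a set" and E :: "'a \<Rightarrow> 'a \<Rightarrow> bool" and n k :: nat
  assumes "simple_graph V E"
    and "card V = n"
    and "k \<le> n"
    and "degenerate k V E"
  shows "mu V E < mu (S_verts n) (S_edge k) \<or> graph_iso V E (S_verts n) (S_edge k)"
proof (cases "k = 0")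
  case True
  have "finite V" using assms(1) by (simp add: simple_graph_def)
  moreover have "E u w \<longleftrightarrow> split_edge {} u w" if "u \<in> V" "w \<in> V" for u w
    using degenerate_0_no_edge[OF assms(1) _ that] assms(4) True by (simp add: split_edge_def)
  ultimately have "graph_iso V E (S_verts n) (S_edge 0)"
    using graph_iso_split_edge[of V "{}" 0 n E] assms(2) by simp
  then show ?thesis using True by simp
next
  case False
  then have k: "1 \<le> k" by simp
  have "split_radius n k \<le> mu (S_verts n) (S_edge k)"
    unfolding S_verts_def by (rule eigenvalue_le_mu[OF _ split_radius_eigenvalue[OF k assms(3)]]) simp
  then show ?thesis
    using degenerate_iso_if_split_radius_le_mu[OF assms(1,4,2) k assms(3)] by linarith
qed

end
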